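(* Let ${\bf S}$ be any logic over $For$ (a consequence relation $\vdash_{\bf S}$) lying between ${\bf Km}$ and ${\bf T45m}$, i.e. $\Gamma\vdash_{\bf Km}\alpha$ implies $\Gamma\vdash_{\bf S}\alpha$, and $\Gamma\vdash_{\bf S}\alpha$ implies $\Gamma\vdash_{\bf T45m}\alpha$, for all $\Gamma\cup\{\alpha\}\subseteq For$. Then ${\bf S}$ cannot be characterized by a single finite deterministic logical matrix; that is, there is no logical matrix $\mathcal M=\langle M,D\rangle$ with $M$ finite such that, for all $\Gamma\cup\{\alpha\}\subseteq For$, $\Gamma\vdash_{\bf S}\alpha$ iff $\Gamma\vDash_{\mathcal M}\alpha$.
   Context: Formulas are built from a denumerable set of propositional variables by the unary connectives $\neg$, $\Box$ and the binary connective $\to$; $For$ is the set of all formulas. Abbreviations: $\Diamond\alpha:=\neg\Box\neg\alpha$, $\alpha\vee\beta:=\neg\alpha\to\beta$, $\alpha\wedge\beta:=\neg(\alpha\to\neg\beta)$. All Hilbert calculi below have as axioms all instances (over $For$) of the axiom schemas of a standard Hilbert calculus for classical propositional logic in the signature $\{\neg,\to\}$, plus the listed modal schemas, with modus ponens as the only rule; $\Gamma\vdash_{\bf L}\alpha$ means there is a derivation of $\alpha$ from $\Gamma$ in ${\bf L}$. ${\bf Km}$: (K') $\Diamond\alpha\to(\Box(\alpha\to\beta)\to(\Box\alpha\to\Box\beta))$; (K1') $\Diamond\neg\beta\to(\Box(\alpha\to\beta)\to(\Diamond\alpha\to\Diamond\beta))$; (K2') $\Diamond\alpha\to(\Diamond(\alpha\to\beta)\to(\Box\alpha\to\Diamond\beta))$;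 (M3') $(\Diamond\alpha\vee\Diamond\neg\alpha)\to(\Diamond\beta\to\Diamond(\alpha\to\beta))$; (M4') $\Diamond\neg\beta\to(\Diamond\neg\alpha\to\Diamond(\alpha\to\beta))$; (I1) $(\Box\alpha\wedge\Box\neg\alpha)\to(\Box(\alpha\to\beta)\wedge\Box\neg(\alpha\to\beta))$; (I2) $(\Box\beta\wedge\Box\neg\beta)\to(\Box(\alpha\to\beta)\wedge\Box\neg(\alpha\to\beta))$; (M1) $\neg\Diamond\alpha\to\Box(\alpha\to\beta)$; (M2) $\Box\beta\to\Box(\alpha\to\beta)$; (DN1) $\Box\alpha\to\Box\neg\neg\alpha$; (DN2) $\Box\neg\neg\alpha\to\Box\alpha$. ${\bf T45m}$: (K) $\Box(\alpha\to\beta)\to(\Box\alpha\to\Box\beta)$; (K1) $\Box(\alpha\to\beta)\to(\Diamond\alpha\to\Diamond\beta)$; (K2) $\Diamond(\alpha\to\beta)\to(\Box\alpha\to\Diamond\beta)$; (M1); (M2); (M3) $\Diamond\beta\to\Diamond(\alpha\to\beta)$; (M4) $\Diamond\neg\alpha\to\Diamond(\alpha\to\beta)$; (T) $\Box\alpha\to\alpha$; (DN1); (DN2); (4) $\Box\alpha\to\Box\Box\alpha$; (5) $\Diamond\Box\alpha\to\Box\alpha$. A (deterministic) logical matrix $\mathcal M=\langle M,D\rangle$ consists of a set $M$ with unary operations for $\neg,\Box$ and a binary operation for $\to$, and $D\subseteq M$; valuations are homomorphisms $h:For\to M$, and $\Gamma\vDash_{\mathcal M}\alpha$ iff every valuation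 mapping $\Gamma$ into $D$ maps $\alpha$ into $D$. *)

theory Defs
  imports Main
begin

datatype fm = Var nat | Neg fm | Box fm | Imp fm fm

definition Dia :: "fm \<Rightarrow> fm" where "Dia a = Neg (Box (Neg a))"
definition Or :: "fm \<Rightarrow> fm \<Rightarrow> fm" where "Or a b = Imp (Neg a) b"
definition And :: "fm \<Rightarrow> fm \<Rightarrow> fm" where "And a b = Neg (Imp a (Neg b))"

text \<open>Classical propositional axioms (Lukasiewicz's complete system in signature neg, imp).\<close>
definition CPC_ax :: "fm \<Rightarrow> bool" where
  "CPC_ax f \<longleftrightarrow>
     (\<exists>a b. f = Imp a (Imp b a)) \<or>
     (\<exists>a b c. f = Imp (Imp a (Imp b c)) (Imp (Imp a b) (Imp a c))) \<or>
     (\<exists>a b. f = Imp (Imp (Neg a) (Neg b)) (Imp b a))"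

definition Km_ax :: "fm \<Rightarrow> bool" where
  "Km_ax f \<longleftrightarrow> CPC_ax f \<or>
     (\<exists>a b. f = Imp (Dia a) (Imp (Box (Imp a b)) (Imp (Box a) (Box b)))) \<or>
     (\<exists>a b. f = Imp (Dia (Neg b)) (Imp (Box (Imp a b)) (Imp (Dia a) (Dia b)))) \<or>
     (\<exists>a b. f = Imp (Dia a) (Imp (Dia (Imp a b)) (Imp (Box a) (Dia b)))) \<or>
     (\<exists>a b. f = Imp (Or (Dia a) (Dia (Neg a))) (Imp (Dia b) (Dia (Imp a b)))) \<or>
     (\<exists>a b. f = Imp (Dia (Neg b)) (Imp (Dia (Neg a)) (Dia (Imp a b)))) \<or>
     (\<exists>a b. f = Imp (And (Box a) (Box (Neg a))) (And (Box (Imp a b)) (Box (Neg (Imp a b))))) \<or>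
     (\<exists>a b. f = Imp (And (Box b) (Box (Neg b))) (And (Box (Imp a b)) (Box (Neg (Imp a b))))) \<or>
     (\<exists>a b. f = Imp (Neg (Dia a)) (Box (Imp a b))) \<or>
     (\<exists>a b. f = Imp (Box b) (Box (Imp a b))) \<or>
     (\<exists>a. f = Imp (Box a) (Box (Neg (Neg a)))) \<or>
     (\<exists>a. f = Imp (Box (Neg (Neg a))) (Box a))"

definition T45m_ax :: "fm \<Rightarrow> bool" where
  "T45m_ax f \<longleftrightarrow> CPC_ax f \<or>
     (\<exists>a b. f = Imp (Box (Imp a b)) (Imp (Box a) (Box b))) \<or>
     (\<exists>a b. f = Imp (Box (Imp a b)) (Imp (Dia a) (Dia b))) \<or>
     (\<exists>a b. f = Imp (Dia (Imp a b)) (Imp (Box a) (Dia b))) \<or>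
     (\<exists>a b. f = Imp (Neg (Dia a)) (Box (Imp a b))) \<or>
     (\<exists>a b. f = Imp (Box b) (Box (Imp a b))) \<or>
     (\<exists>a b. f = Imp (Dia b) (Dia (Imp a b))) \<or>
     (\<exists>a b. f = Imp (Dia (Neg a)) (Dia (Imp a b))) \<or>
     (\<exists>a. f = Imp (Box a) a) \<or>
     (\<exists>a. f = Imp (Box a) (Box (Neg (Neg a)))) \<or>
     (\<exists>a. f = Imp (Box (Neg (Neg a))) (Box a)) \<or>
     (\<exists>a. f = Imp (Box a) (Box (Box a))) \<or>
     (\<exists>a. f = Imp (Dia (Box a)) (Box a))"

inductive derivable :: "(fm \<Rightarrow> bool) \<Rightarrow> fm set \<Rightarrow> fm \<Rightarrow> bool" for Ax where
  prem: "a \<in> G \<Longrightarrow> derivable Ax G a"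
| ax: "Ax a \<Longrightarrow> derivable Ax G a"
| mp: "derivable Ax G a \<Longrightarrow> derivable Ax G (Imp a b) \<Longrightarrow> derivable Ax G b"

definition consequence_relation :: "(fm set \<Rightarrow> fm \<Rightarrow> bool) \<Rightarrow> bool" where
  "consequence_relation S \<longleftrightarrow>
     (\<forall>G a. a \<in> G \<longrightarrow> S G a) \<and>
     (\<forall>G H a. S G a \<and> G \<subseteq> H \<longrightarrow> S H a) \<and>
     (\<forall>G H a. (\<forall>b\<in>H. S G b) \<and> S (G \<union> H) a \<longrightarrow> S G a)"

fun eval :: "('a \<Rightarrow> 'a) \<Rightarrow> ('a \<Rightarrow> 'a) \<Rightarrow> ('a \<Rightarrow> 'a \<Rightarrow> 'a) \<Rightarrow> (nat \<Rightarrow> 'a) \<Rightarrow> fm \<Rightarrow> 'a" where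
  "eval ng bx im v (Var n) = v n"
| "eval ng bx im v (Neg a) = ng (eval ng bx im v a)"
| "eval ng bx im v (Box a) = bx (eval ng bx im v a)"
| "eval ng bx im v (Imp a b) = im (eval ng bx im v a) (eval ng bx im v b)"

definition is_matrix :: "'a set \<Rightarrow> 'a set \<Rightarrow> ('a \<Rightarrow> 'a) \<Rightarrow> ('a \<Rightarrow> 'a) \<Rightarrow> ('a \<Rightarrow> 'a \<Rightarrow> 'a) \<Rightarrow> bool" where
  "is_matrix M D ng bx im \<longleftrightarrow> D \<subseteq> M \<and> (\<forall>x\<in>M. ng x \<in> M) \<and> (\<forall>x\<in>M. bx x \<in> M)
     \<and> (\<forall>x\<in>M. \<forall>y\<in>M. im x y \<in> M)"

definition matrix_conseq :: "'a set \<Rightarrow> 'a set \<Rightarrow> ('a \<Rightarrow> 'a) \<Rightarrow> ('a \<Rightarrow> 'a) \<Rightarrow> ('a \<Rightarrow> 'a \<Rightarrow> 'a)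
    \<Rightarrow> fm set \<Rightarrow> fm \<Rightarrow> bool" where
  "matrix_conseq M D ng bx im G a \<longleftrightarrow>
     (\<forall>v. (\<forall>n. v n \<in> M) \<longrightarrow> (\<forall>g\<in>G. eval ng bx im v g \<in> D) \<longrightarrow> eval ng bx im v a \<in> D)"

end

theory Submission
  imports Defs
begin

text \<open>
  Let \<open>\<iota> i j\<close> (\<open>identifies i j\<close> below) be \<open>\<box>(p\<^sub>i \<rightarrow> p\<^sub>i) \<rightarrow> \<box>(p\<^sub>i \<rightarrow> p\<^sub>j)\<close>. In a matrix with \<open>N\<close> elements every
  valuation identifies two of \<open>p\<^sub>0, \<dots>, p\<^sub>N\<close>, say \<open>p\<^sub>i\<close> and \<open>p\<^sub>j\<close>, and then gives
  \<open>\<not> \<iota> i j\<close> the value of \<open>\<not> \<iota> i i\<close>, the negation of a classical tautology. So if the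
  matrix validates \<^bold>\<open>Km\<close>, the premises \<open>\<not> \<iota> i j\<close> (\<open>i < j \<le> N\<close>) entail every formula.
  They do not do so in \<^bold>\<open>T45m\<close>: a four-valued valuation in which the value of an
  implication also depends on whether antecedent and consequent are the same formula
  validates \<^bold>\<open>T45m\<close> and modus ponens, designates every \<open>\<not> \<iota> i j\<close> with \<open>i \<noteq> j\<close>, but not \<open>\<box>p\<^sub>0\<close>.
\<close>

lemma derivable_imp_self:
  assumes "\<And>f. CPC_ax f \<Longrightarrow> Ax f"
  shows "derivable Ax G (Imp a a)"
proof -
  have "derivable Ax G (Imp (Imp a (Imp (Imp a a) a)) (Imp (Imp a (Imp a a)) (Imp a a)))"
    and "derivable Ax G (Imp a (Imp (Imp a a) a))"
    and "derivable Ax G (Imp a (Imp a a))"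
    by (rule derivable.ax, rule assms, unfold CPC_ax_def, blast)+
  then show ?thesis
    by (meson derivable.mp)
qed

lemma derivable_explosion:
  assumes "\<And>f. CPC_ax f \<Longrightarrow> Ax f" and "a \<in> G" and "Neg a \<in> G"
  shows "derivable Ax G b"
proof -
  have "derivable Ax G (Imp (Neg a) (Imp (Neg b) (Neg a)))"
    and "derivable Ax G (Imp (Imp (Neg b) (Neg a)) (Imp a b))"
    by (rule derivable.ax, rule assms, unfold CPC_ax_def, blast)+
  then show ?thesis
    using assms(2,3) by (meson derivable.mp derivable.prem)
qed

lemma Km_ax_if_CPC_ax: "CPC_ax f \<Longrightarrow> Km_ax f"
  by (simp add: Km_ax_def)

lemma valuation_in_finite_not_inj:
  assumes "finite M" and "\<And>n. v n \<in> M"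
  obtains i j where "i < j" "j \<le> card M" "v i = v j"
proof -
  have "\<not> inj_on v {0..card M}"
  proof
    assume "inj_on v {0..card M}"
    then have "card {0..card M} \<le> card M"
      using card_inj_on_le[OF _ _ \<open>finite M\<close>] assms(2) by blast
    then show False
      by simp
  qed
  then obtain i j where "i \<le> card M" "j \<le> card M" "i \<noteq> j" "v i = v j"
    unfolding inj_on_def by auto
  then show thesis
    by (metis linorder_neqE_nat that)
qed

definition identifies :: "nat \<Rightarrow> nat \<Rightarrow> fm" where
  "identifies i j = Imp (Box (Imp (Var i) (Var i))) (Box (Imp (Var i) (Var j)))"

definition pairwise_apart :: "nat \<Rightarrow> fm set" where
  "pairwise_apart n = {Neg (identifies i j) | i j. i < j \<and> j \<le> n}"

lemma matrix_conseq_pairwise_apart_explodes: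
  assumes "finite M"
    and Km: "\<And>G a. derivable Km_ax G a \<Longrightarrow> matrix_conseq M D ng bx im G a"
  shows "matrix_conseq M D ng bx im (pairwise_apart (card M)) b"
  unfolding matrix_conseq_def
proof (intro allI impI)
  fix v
  assume v: "\<forall>n. v n \<in> M" and apart: "\<forall>g \<in> pairwise_apart (card M). eval ng bx im v g \<in> D"
  obtain i j where ij: "i < j" "j \<le> card M" "v i = v j"
    using valuation_in_finite_not_inj[OF \<open>finite M\<close>] v by blast
  have "eval ng bx im v (Neg (identifies i j)) \<in> D"
    using apart ij(1,2) unfolding pairwise_apart_def by blast
  then have "eval ng bx im v (Neg (identifies i i)) \<in> D"
    using ij(3) by (simp add: identifies_def)
  moreover have "matrix_conseq M D ng bx im {} (identifies i i)"
    unfolding identifies_def by (rule Km, rule derivable_imp_self[OF Km_ax_if_CPC_ax])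
  then have "eval ng bx im v (identifies i i) \<in> D"
    using v by (simp add: matrix_conseq_def)
  moreover have "matrix_conseq M D ng bx im {identifies i i, Neg (identifies i i)} b"
    by (rule Km, rule derivable_explosion[OF Km_ax_if_CPC_ax]) auto
  ultimately show "eval ng bx im v b \<in> D"
    using v by (simp add: matrix_conseq_def)
qed

datatype val = TP | TM | FM | FP

definition designated :: "val \<Rightarrow> bool" where
  "designated x \<longleftrightarrow> x = TP \<or> x = TM"

fun neg_val :: "val \<Rightarrow> val" where
  "neg_val TP = FP" | "neg_val TM = FM" | "neg_val FM = TM" | "neg_val FP = TP"

fun box_val :: "val \<Rightarrow> val" where
  "box_val TP = TP" | "box_val _ = FP"

fun imp_val :: "val \<Rightarrow> val \<Rightarrow> val" where
  "imp_val FP y = TP"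
| "imp_val x TP = TP"
| "imp_val TP y = y"
| "imp_val TM FP = FM"
| "imp_val TM y = y"
| "imp_val FM _ = TM"

lemma designated_neg_val [simp]: "designated (neg_val x) \<longleftrightarrow> \<not> designated x"
  by (cases x) (simp_all add: designated_def)

lemma designated_box_val [simp]: "designated (box_val x) \<longleftrightarrow> x = TP"
  by (cases x) (simp_all add: designated_def)

lemma designated_imp_val [simp]: "designated (imp_val x y) \<longleftrightarrow> (designated x \<longrightarrow> designated y)"
  by (cases x; cases y) (simp_all add: designated_def)

lemma designated_TP [simp]: "designated TP"
  by (simp add: designated_def)

lemma neg_val_eq_iff [simp]:
  "neg_val x = TP \<longleftrightarrow> x = FP" "neg_val x = FP \<longleftrightarrow> x = TP" "neg_val (neg_val x) = x"
  by (cases x; simp)+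

lemma box_val_eq_iff [simp]: "box_val x = TP \<longleftrightarrow> x = TP" "box_val x = FP \<longleftrightarrow> x \<noteq> TP"
  by (cases x; simp)+

lemma imp_val_eq_iff [simp]:
  "imp_val x y = TP \<longleftrightarrow> x = FP \<or> y = TP" "imp_val x y = FP \<longleftrightarrow> x = TP \<and> y = FP"
  by (cases x; cases y; simp)+

text \<open>
  Not a matrix valuation: every self-implication \<open>a \<rightarrow> a\<close> is sent to \<open>TP\<close>, while \<open>p\<^sub>i \<rightarrow> p\<^sub>j\<close>
  with \<open>i \<noteq> j\<close> gets \<open>TM\<close>, although all variables have the same value.
\<close>

primrec syntactic_val :: "fm \<Rightarrow> val" where
  "syntactic_val (Var n) = TM"
| "syntactic_val (Neg a) = neg_val (syntactic_val a)"
| "syntactic_val (Box a) = box_val (syntactic_val a)"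
| "syntactic_val (Imp a b) = (if a = b then TP else imp_val (syntactic_val a) (syntactic_val b))"

lemma T45m_ax_designated:
  assumes "T45m_ax f"
  shows "designated (syntactic_val f)"
  using assms unfolding T45m_ax_def CPC_ax_def Dia_def
  by (elim disjE exE) auto

lemma derivable_T45m_designated:
  "derivable T45m_ax G a \<Longrightarrow> \<forall>g\<in>G. designated (syntactic_val g) \<Longrightarrow> designated (syntactic_val a)"
proof (induction rule: derivable.induct)
  case (prem a G)
  then show ?case by blast
next
  case (ax a G)
  from ax.hyps show ?case by (rule T45m_ax_designated)
next
  case (mp G a b)
  then show ?case by (auto split: if_splits)
qed

lemma not_derivable_T45m_Box_Var_from_pairwise_apart:
  "\<not> derivable T45m_ax (pairwise_apart n) (Box (Var k))"
proof
  assume "derivable T45m_ax (pairwise_apart n) (Box (Var k))"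
  moreover have "\<forall>g \<in> pairwise_apart n. designated (syntactic_val g)"
    by (auto simp: pairwise_apart_def identifies_def designated_def)
  ultimately have "designated (syntactic_val (Box (Var k)))"
    by (rule derivable_T45m_designated)
  then show False
    by (simp add: designated_def)
qed

theorem mainTheorem4:
  fixes S :: "fm set \<Rightarrow> fm \<Rightarrow> bool"
  assumes "consequence_relation S"
    and "\<forall>G a. derivable Km_ax G a \<longrightarrow> S G a"
    and "\<forall>G a. S G a \<longrightarrow> derivable T45m_ax G a"
  shows "\<not> (\<exists>(M :: 'a set) D ng bx im. finite M \<and> is_matrix M D ng bx im \<and>
            (\<forall>G a. S G a \<longleftrightarrow> matrix_conseq M D ng bx im G a))"
proof
  assume "\<exists>(M :: 'a set) D ng bx im. finite M \<and> is_matrix M D ng bx im \<and>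
            (\<forall>G a. S G a \<longleftrightarrow> matrix_conseq M D ng bx im G a)"
  then obtain M :: "'a set" and D ng bx im where "finite M"
    and characterizes: "\<And>G a. S G a \<longleftrightarrow> matrix_conseq M D ng bx im G a"
    by blast
  have "matrix_conseq M D ng bx im (pairwise_apart (card M)) (Box (Var 0))"
    using \<open>finite M\<close> assms(2) characterizes by (blast intro: matrix_conseq_pairwise_apart_explodes)
  then have "derivable T45m_ax (pairwise_apart (card M)) (Box (Var 0))"
    using assms(3) characterizes by blast
  then show False
    using not_derivable_T45m_Box_Var_from_pairwise_apart by blast
qed

end
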